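(* Let $|A|\ge2$, let $\mathcal F\subseteq\mathcal O(A)$ be a conservative clone with $\mathrm r(\mathcal F)=r\ge3$. Then there exist a Post class $P\in\{O_1,D_1,D_2,L_4\}$ and a surjective map $\tau\colon\mathcal F\to P$ such that for every $B\in[A]^2$, every bijection $\sigma\colon B\to\{0,1\}$, every $n$, every $f\in\mathcal F_{[n]}$ and every $\mathbf a\in B^n$, $$f(\mathbf a)=\sigma^{-1}\big(\tau(f)(\sigma(\mathbf a))\big),$$ where $\sigma(\mathbf a)$ is applied componentwise. Moreover, if $r\ge4$, then $P=O_1$ and every $f\in\mathcal F_{[n]}$ coincides with some projection $e^n_i$ on the set $A^n_{<r}$.
   Context: $\mathcal O(A)=\bigcup_{n<\omega}A^{A^n}$; $\mathcal F_{[n]}=\mathcal F\cap A^{A^n}$. $\mathrm{ran}\,\mathbf a$ is the set of entries of $\mathbf a\in A^n$; $A^n_{<r}=\{\mathbf a\in A^n: |\mathrm{ran}\,\mathbf a|<r\}$; $[A]^2$ the 2-element subsets of $A$. A clone with carrier $A$ is a subset of $\mathcal O(A)$ containing all projections $e^n_i(a_0\dots a_{n-1})=a_i$ and closed under composition. $f$ is conservative if $f(\mathbf a)\in\mathrm{ran}\,\mathbf a$ for all $\mathbf a$; a clone is conservative if all its members are. $\mathrm r(\mathcal F)$ is the least $r$ such that $\mathcal F$ contains an $r$-ary function that is not a projection ($\mathrm r(\mathcal F)=\omega$ if $\mathcal F$ consists of projections only). Post classes are clones on $\{0,1\}$: a Boolean function $g$ is self-dual if $g(1-x_0,\dots,1-x_{n-1})=1-g(x_0,\dots,x_{n-1})$;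 $O_1$ is the set of all Boolean projections; $D_1$ is the set of all self-dual Boolean functions $g$ with $g(0,\dots,0)=0$; $D_2$ is the set of all self-dual monotone Boolean functions; $L_4$ is the clone generated by $x\oplus y\oplus z$ (the functions $x_{i_1}\oplus\dots\oplus x_{i_k}$ with $k$ odd). *)

theory Defs
  imports Main "HOL-Library.Extended_Nat"
begin

text \<open>A finitary operation on a carrier: its arity n together with a function on lists.
  Extensional convention: the function is undefined off A^n.\<close>
type_synonym 'a oper = "nat \<times> ('a list \<Rightarrow> 'a)"

definition tuples :: "'a set \<Rightarrow> nat \<Rightarrow> 'a list set" where
  "tuples A n = {xs. length xs = n \<and> set xs \<subseteq> A}"

definition is_op :: "'a set \<Rightarrow> 'a oper \<Rightarrow> bool" where
  "is_op A f \<longleftrightarrow> (\<forall>xs\<in>tuples A (fst f). snd f xs \<in> A)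
     \<and> (\<forall>xs. xs \<notin> tuples A (fst f) \<longrightarrow> snd f xs = undefined)"

definition proj :: "'a set \<Rightarrow> nat \<Rightarrow> nat \<Rightarrow> 'a oper" where
  "proj A n i = (n, \<lambda>xs. if xs \<in> tuples A n then xs ! i else undefined)"

definition compose :: "'a set \<Rightarrow> nat \<Rightarrow> 'a oper \<Rightarrow> 'a oper list \<Rightarrow> 'a oper" where
  "compose A m f gs = (m, \<lambda>xs. if xs \<in> tuples A m
       then snd f (map (\<lambda>g. snd g xs) gs) else undefined)"

definition clone :: "'a set \<Rightarrow> 'a oper set \<Rightarrow> bool" where
  "clone A F \<longleftrightarrow> (\<forall>f\<in>F. is_op A f)
     \<and> (\<forall>n i. i < n \<longrightarrow> proj A n i \<in> F)
     \<and> (\<forall>f\<in>F. \<forall>m gs. length gs = fst f \<and> set gs \<subseteq> F \<and> (\<forall>g\<in>set gs. fst g = m)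
            \<longrightarrow> compose A m f gs \<in> F)"

definition conservative :: "'a set \<Rightarrow> 'a oper set \<Rightarrow> bool" where
  "conservative A F \<longleftrightarrow> (\<forall>f\<in>F. \<forall>xs\<in>tuples A (fst f). snd f xs \<in> set xs)"

definition is_projection :: "'a set \<Rightarrow> 'a oper \<Rightarrow> bool" where
  "is_projection A f \<longleftrightarrow> (\<exists>i<fst f. f = proj A (fst f) i)"

definition clone_rank :: "'a set \<Rightarrow> 'a oper set \<Rightarrow> enat" where
  "clone_rank A F = (if \<exists>f\<in>F. \<not> is_projection A f
      then enat (LEAST r. \<exists>f\<in>F. fst f = r \<and> \<not> is_projection A f) else \<infinity>)"

text \<open>Post classes; Boolean 0/1 are False/True.\<close>
definition self_dual :: "bool oper \<Rightarrow> bool" where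
  "self_dual g \<longleftrightarrow> (\<forall>xs\<in>tuples UNIV (fst g). snd g (map Not xs) = (\<not> snd g xs))"

definition monotone_bool :: "bool oper \<Rightarrow> bool" where
  "monotone_bool g \<longleftrightarrow> (\<forall>xs\<in>tuples UNIV (fst g). \<forall>ys\<in>tuples UNIV (fst g).
      (\<forall>i<fst g. xs ! i \<le> ys ! i) \<longrightarrow> snd g xs \<le> snd g ys)"

definition O1 :: "bool oper set" where
  "O1 = {proj UNIV n i | n i. i < n}"

definition D1 :: "bool oper set" where
  "D1 = {g. is_op UNIV g \<and> self_dual g \<and> snd g (replicate (fst g) False) = False}"

definition D2 :: "bool oper set" where
  "D2 = {g. is_op UNIV g \<and> self_dual g \<and> monotone_bool g}"

definition L4 :: "bool oper set" where
  "L4 = {(n, \<lambda>xs. if length xs = n then foldr (\<noteq>) (map (\<lambda>i. xs ! i) is) False else undefined)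
          | n is. odd (length is) \<and> set is \<subseteq> {..<n}}"

end

theory Submission
  imports Defs
begin

text \<open>Fix \<open>b\<^sub>0 \<noteq> b\<^sub>1\<close> in \<open>A\<close> and let \<open>\<tau>(f)\<close> be the Boolean function that records whether
  \<open>f\<close> returns \<open>b\<^sub>1\<close> on \<open>{b\<^sub>0, b\<^sub>1}\<close>-valued tuples. Since \<open>r \<ge> 3\<close>, every binary minor of a
  member of \<open>F\<close> is a projection, so \<open>f\<close> acts in the same way on every two-element subset,
  whatever its labelling. Conservativity makes \<open>\<tau>(f)\<close> self-dual and zero-preserving, and
  \<open>\<tau>\<close> commutes with composition, so \<open>\<tau> ` F\<close> is a subclone of \<open>D1\<close>. Post's
  classification of these subclones is recovered from the ternary members: the clone is
  \<open>O1\<close>, \<open>D2\<close>, \<open>L4\<close> or \<open>D1\<close> according to whether it contains the majority and the ternary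
  parity function (upper bounds by reading a member as a predicate on subsets of its
  variables, lower bounds by Baker--Pixley interpolation and by iterating the parity).
  If \<open>r \<ge> 4\<close> the ternary members of \<open>F\<close> are projections, so \<open>\<tau> ` F = O1\<close>; and when
  \<open>\<tau>(f) = e\<^sub>i\<close>, the minor of \<open>f\<close> identifying variables along a tuple with fewer than
  \<open>r\<close> distinct entries is a projection, which must select the \<open>i\<close>-th entry.\<close>

section \<open>Minors and the rank of a clone\<close>

lemma tuples_UNIV [simp]: "tuples UNIV n = {xs. length xs = n}"
  by (auto simp: tuples_def)

lemma fst_proj [simp]: "fst (proj A n i) = n"
  by (simp add: proj_def)

lemma fst_compose [simp]: "fst (compose A m f gs) = m"
  by (simp add: compose_def)

lemma snd_proj: "xs \<in> tuples A n \<Longrightarrow> snd (proj A n i) xs = xs ! i"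
  by (simp add: proj_def)

lemma snd_compose:
  "xs \<in> tuples A m \<Longrightarrow> snd (compose A m f gs) xs = snd f (map (\<lambda>g. snd g xs) gs)"
  by (simp add: compose_def)

lemma is_op_proj_UNIV: "is_op UNIV (proj UNIV n i)"
  by (auto simp: is_op_def proj_def)

lemma is_op_compose_UNIV: "is_op UNIV (compose UNIV m f gs)"
  by (auto simp: is_op_def compose_def)

lemma clone_is_op: "clone A F \<Longrightarrow> f \<in> F \<Longrightarrow> is_op A f"
  by (simp add: clone_def)

lemma clone_proj: "clone A F \<Longrightarrow> i < n \<Longrightarrow> proj A n i \<in> F"
  by (simp add: clone_def)

lemma clone_compose:
  "clone A F \<Longrightarrow> f \<in> F \<Longrightarrow> length gs = fst f \<Longrightarrow> set gs \<subseteq> F \<Longrightarrow> \<forall>g\<in>set gs. fst g = m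
    \<Longrightarrow> compose A m f gs \<in> F"
  by (simp add: clone_def)

lemma is_op_UNIV_eqI:
  assumes "is_op UNIV g" "is_op UNIV h" "fst g = fst h"
    and "\<And>xs. length xs = fst g \<Longrightarrow> snd g xs = snd h xs"
  shows "g = h"
proof (rule prod_eqI)
  show "snd g = snd h"
  proof
    fix xs
    show "snd g xs = snd h xs"
      using assms by (cases "length xs = fst g") (auto simp: is_op_def)
  qed
qed fact

definition minor_op :: "'a set \<Rightarrow> nat \<Rightarrow> 'a oper \<Rightarrow> (nat \<Rightarrow> nat) \<Rightarrow> 'a oper" where
  "minor_op A k f \<pi> = compose A k f (map (\<lambda>i. proj A k (\<pi> i)) [0..<fst f])"

lemma fst_minor_op [simp]: "fst (minor_op A k f \<pi>) = k"
  by (simp add: minor_op_def)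

lemma snd_minor_op:
  "w \<in> tuples A k \<Longrightarrow> snd (minor_op A k f \<pi>) w = snd f (map (\<lambda>i. w ! \<pi> i) [0..<fst f])"
  by (simp add: minor_op_def snd_compose snd_proj comp_def)

lemma clone_minor_op:
  assumes "clone A F" "f \<in> F" "\<And>i. i < fst f \<Longrightarrow> \<pi> i < k"
  shows "minor_op A k f \<pi> \<in> F"
  unfolding minor_op_def
  by (rule clone_compose[OF assms(1,2)]) (auto simp: clone_proj[OF assms(1)] assms(3))

lemma remdups_minor:
  assumes "clone A F" "f \<in> F" "a \<in> tuples A (fst f)"
  obtains h where "h \<in> F" "fst h = card (set a)"
    and "\<And>\<rho>. \<rho> ` set a \<subseteq> A \<Longrightarrow> snd h (map \<rho> (remdups a)) = snd f (map \<rho> a)"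
proof -
  define vs where "vs = remdups a"
  have "\<forall>y\<in>set a. \<exists>l<length vs. vs ! l = y" by (metis vs_def in_set_conv_nth set_remdups)
  then obtain idx where idx: "\<And>y. y \<in> set a \<Longrightarrow> idx y < length vs \<and> vs ! idx y = y" by metis
  have a: "length a = fst f" "set a \<subseteq> A" using assms(3) by (auto simp: tuples_def)
  define h where "h = minor_op A (length vs) f (\<lambda>l. idx (a ! l))"
  have "h \<in> F"
    unfolding h_def by (rule clone_minor_op[OF assms(1,2)]) (use idx a in auto)
  moreover have "fst h = card (set a)"
    by (simp add: h_def vs_def length_remdups_card_conv)
  moreover have "snd h (map \<rho> vs) = snd f (map \<rho> a)" if "\<rho> ` set a \<subseteq> A" for \<rho>
  proof -
    have "map \<rho> vs \<in> tuples A (length vs)" using that by (auto simp: tuples_def vs_def)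
    moreover have "map (\<lambda>l. map \<rho> vs ! idx (a ! l)) [0..<fst f] = map \<rho> a"
      using idx a by (auto simp: list_eq_iff_nth_eq)
    ultimately show ?thesis by (simp add: h_def snd_minor_op)
  qed
  ultimately show ?thesis using that by (simp add: vs_def)
qed

lemma is_projection_below_clone_rank:
  assumes "f \<in> F" "enat (fst f) < clone_rank A F"
  shows "is_projection A f"
proof (rule ccontr)
  assume "\<not> is_projection A f"
  then have "clone_rank A F \<le> enat (fst f)"
    using assms(1) by (auto simp: clone_rank_def intro: Least_le)
  with assms(2) show False by simp
qed

section \<open>Ternary self-dual Boolean functions\<close>

definition maj3 :: "bool oper" where
  "maj3 = (3, \<lambda>xs. if length xs = 3
     then (xs ! 0 \<and> xs ! 1) \<or> (xs ! 0 \<and> xs ! 2) \<or> (xs ! 1 \<and> xs ! 2) else undefined)"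

definition xor3 :: "bool oper" where
  "xor3 = (3, \<lambda>xs. if length xs = 3 then xs ! 0 \<noteq> (xs ! 1 \<noteq> xs ! 2) else undefined)"

lemma fst_maj3 [simp]: "fst maj3 = 3"
  by (simp add: maj3_def)

lemma fst_xor3 [simp]: "fst xor3 = 3"
  by (simp add: xor3_def)

lemma snd_maj3: "snd maj3 [x, y, z] = ((x \<and> y) \<or> (x \<and> z) \<or> (y \<and> z))"
  by (simp add: maj3_def)

lemma snd_xor3: "snd xor3 [x, y, z] = (x \<noteq> (y \<noteq> z))"
  by (simp add: xor3_def)

lemma is_op_maj3: "is_op UNIV maj3"
  by (auto simp: is_op_def maj3_def)

lemma is_op_xor3: "is_op UNIV xor3"
  by (auto simp: is_op_def xor3_def)

lemma length_3_cases:
  assumes "length xs = 3"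
  obtains x y z where "xs = [x, y, z]"
  using assms by (auto simp: numeral_3_eq_3 length_Suc_conv)

lemma ternary_bool_op_eqI:
  assumes "is_op UNIV g" "is_op UNIV h" "fst g = 3" "fst h = 3"
    and "\<And>x y z. snd g [x, y, z] = snd h [x, y, z]"
  shows "g = h"
  by (rule is_op_UNIV_eqI) (use assms in \<open>auto elim: length_3_cases\<close>)

lemma O1_ternary_eval:
  assumes "g \<in> O1" "fst g = 3"
  shows "\<exists>i<3. \<forall>x y z. snd g [x, y, z] = [x, y, z] ! i"
  using assms by (auto simp: O1_def snd_proj)

lemma maj3_notin_O1: "maj3 \<notin> O1"
proof
  assume "maj3 \<in> O1"
  then obtain i where i: "i < 3" "\<forall>x y z. snd maj3 [x, y, z] = [x, y, z] ! i"
    using O1_ternary_eval[OF _ fst_maj3] by blast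
  from i(2) have "snd maj3 [True, False, False] = [True, False, False] ! i"
    and "snd maj3 [False, True, False] = [False, True, False] ! i"
    and "snd maj3 [False, False, True] = [False, False, True] ! i" by blast+
  with i(1) show False
    by (auto simp: snd_maj3 numeral_3_eq_3 less_Suc_eq)
qed

lemma xor3_notin_O1: "xor3 \<notin> O1"
proof
  assume "xor3 \<in> O1"
  then obtain i where i: "i < 3" "\<forall>x y z. snd xor3 [x, y, z] = [x, y, z] ! i"
    using O1_ternary_eval[OF _ fst_xor3] by blast
  from i(2) have "snd xor3 [True, True, False] = [True, True, False] ! i"
    and "snd xor3 [False, True, True] = [False, True, True] ! i" by blast+
  with i(1) show False
    by (auto simp: snd_xor3 numeral_3_eq_3 less_Suc_eq)
qed

lemma D1_ternary_eval:
  assumes "g \<in> D1" "fst g = 3"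
  shows "snd g [x, y, z] =
    (if y = z then (if x = y then x else x = snd g [True, False, False])
     else if x = z then y = snd g [False, True, False]
     else z = snd g [False, False, True])"
proof -
  have "\<forall>xs. length xs = 3 \<longrightarrow> snd g (map Not xs) = (\<not> snd g xs)"
    using assms by (auto simp: D1_def self_dual_def)
  from this[rule_format, of "[_, _, _]"]
  have dual: "snd g [\<not> a, \<not> b, \<not> c] = (\<not> snd g [a, b, c])" for a b c
    by simp
  have "snd g [False, False, False] = False"
    using assms by (simp add: D1_def numeral_3_eq_3)
  then show ?thesis
    using dual[of False False False] dual[of True False False] dual[of False True False]
      dual[of False False True]
    by (cases x; cases y; cases z) auto
qed

lemma D1_ternary_eq_maj3:
  assumes "g \<in> D1" "fst g = 3" "\<not> snd g [True, False, False]"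
    and "\<not> snd g [False, True, False]" "\<not> snd g [False, False, True]"
  shows "g = maj3"
proof (rule ternary_bool_op_eqI)
  fix x y z
  show "snd g [x, y, z] = snd maj3 [x, y, z]"
    using D1_ternary_eval[OF assms(1,2), of x y z] assms(3-5)
    by (cases x; cases y; cases z) (auto simp: snd_maj3)
qed (use assms in \<open>auto simp: D1_def is_op_maj3\<close>)

lemma D1_ternary_eq_xor3:
  assumes "g \<in> D1" "fst g = 3" "snd g [True, False, False]"
    and "snd g [False, True, False]" "snd g [False, False, True]"
  shows "g = xor3"
proof (rule ternary_bool_op_eqI)
  fix x y z
  show "snd g [x, y, z] = snd xor3 [x, y, z]"
    using D1_ternary_eval[OF assms(1,2), of x y z] assms(3-5)
    by (cases x; cases y; cases z) (auto simp: snd_xor3)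
qed (use assms in \<open>auto simp: D1_def is_op_xor3\<close>)

definition rot3 :: "bool oper \<Rightarrow> bool oper" where
  "rot3 g = minor_op UNIV 3 g (\<lambda>i. Suc i mod 3)"

lemma fst_rot3 [simp]: "fst (rot3 g) = 3"
  by (simp add: rot3_def)

lemma snd_rot3: "fst g = 3 \<Longrightarrow> snd (rot3 g) [x, y, z] = snd g [y, z, x]"
  by (simp add: rot3_def snd_minor_op upt_rec)

lemma rot3_in_clone: "clone UNIV C \<Longrightarrow> g \<in> C \<Longrightarrow> fst g = 3 \<Longrightarrow> rot3 g \<in> C"
  unfolding rot3_def by (rule clone_minor_op) auto

lemma D1_ternary_generates_maj3_xor3:
  assumes C: "clone UNIV C" "C \<subseteq> D1" and g: "g \<in> C" "fst g = 3"
    and "snd g [True, False, False]" "snd g [False, True, False]" "\<not> snd g [False, False, True]"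
  shows "maj3 \<in> C \<and> xor3 \<in> C"
proof -
  have g_eval: "snd g [x, y, z] = (if y = z then x else if x = z then y else \<not> z)" for x y z
    using D1_ternary_eval[of g x y z] assms by auto
  have proj3: "proj UNIV 3 i \<in> C" if "i < 3" for i
    using clone_proj[OF C(1) that] .
  txt \<open>\<open>g(x, y, g(x, y, z))\<close> is the majority and \<open>g(x, g(y, z, x), maj(x, y, z))\<close> the parity.\<close>
  define m where "m = compose UNIV 3 g [proj UNIV 3 0, proj UNIV 3 1, g]"
  have "m \<in> C"
    unfolding m_def by (rule clone_compose[OF C(1) g(1)]) (auto simp: g proj3)
  moreover have "m = maj3"
  proof (rule ternary_bool_op_eqI)
    fix x y z
    show "snd m [x, y, z] = snd maj3 [x, y, z]"
      by (simp add: m_def snd_compose snd_proj g_eval snd_maj3)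
  qed (use \<open>m \<in> C\<close> C in \<open>auto simp: m_def is_op_maj3 clone_is_op\<close>)
  ultimately have maj3: "maj3 \<in> C" by simp
  define p where "p = compose UNIV 3 g [proj UNIV 3 0, rot3 g, maj3]"
  have "p \<in> C"
    unfolding p_def
    by (rule clone_compose[OF C(1) g(1)]) (auto simp: g proj3 maj3 rot3_in_clone[OF C(1)])
  moreover have "p = xor3"
  proof (rule ternary_bool_op_eqI)
    fix x y z
    show "snd p [x, y, z] = snd xor3 [x, y, z]"
      by (simp add: p_def snd_compose snd_proj snd_rot3 g g_eval snd_maj3 snd_xor3)
  qed (use \<open>p \<in> C\<close> C in \<open>auto simp: p_def is_op_xor3 clone_is_op\<close>)
  ultimately show ?thesis using maj3 by simp
qed

text \<open>Up to rotation, the signatures of ternary members of \<open>D1\<close> are those of a projection,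
  of \<open>maj3\<close>, of \<open>xor3\<close>, or one with exactly two true values, which generates both.\<close>
lemma D1_ternary_signature:
  assumes C: "clone UNIV C" "C \<subseteq> D1" and g: "g \<in> C" "fst g = 3"
  defines "a \<equiv> snd g [True, False, False]" and "b \<equiv> snd g [False, True, False]"
    and "c \<equiv> snd g [False, False, True]"
  shows "(xor3 \<notin> C \<longrightarrow> \<not> (a \<and> c)) \<and> (maj3 \<notin> C \<longrightarrow> (a \<or> b \<or> c) \<and> (a \<noteq> (b \<noteq> c)))"
proof -
  have g1: "rot3 g \<in> C" and g2: "rot3 (rot3 g) \<in> C"
    using rot3_in_clone[OF C(1)] g by auto
  have two: "maj3 \<in> C \<and> xor3 \<in> C"
    if "(a \<and> b \<and> \<not> c) \<or> (a \<and> \<not> b \<and> c) \<or> (\<not> a \<and> b \<and> c)"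
    using that D1_ternary_generates_maj3_xor3[OF C g]
      D1_ternary_generates_maj3_xor3[OF C g1] D1_ternary_generates_maj3_xor3[OF C g2]
    by (auto simp: snd_rot3 g a_def b_def c_def)
  have "maj3 \<in> C" if "\<not> a" "\<not> b" "\<not> c"
    using D1_ternary_eq_maj3[of g] that C g by (auto simp: a_def b_def c_def)
  moreover have "xor3 \<in> C" if "a" "b" "c"
    using D1_ternary_eq_xor3[of g] that C g by (auto simp: a_def b_def c_def)
  ultimately show ?thesis
    using two by (cases a; cases b; cases c) auto
qed

section \<open>Subclones of D1\<close>

definition partition3 :: "nat \<Rightarrow> nat set \<Rightarrow> nat set \<Rightarrow> nat set \<Rightarrow> bool" where
  "partition3 n X Y Z \<longleftrightarrow> X \<union> Y \<union> Z = {..<n} \<and> X \<inter> Y = {} \<and> X \<inter> Z = {} \<and> Y \<inter> Z = {}"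

definition indicator_list :: "nat \<Rightarrow> nat set \<Rightarrow> bool list" where
  "indicator_list n S = map (\<lambda>i. i \<in> S) [0..<n]"

lemma length_indicator_list [simp]: "length (indicator_list n S) = n"
  by (simp add: indicator_list_def)

lemma indicator_list_of_list: "length xs = n \<Longrightarrow> indicator_list n {i. i < n \<and> xs ! i} = xs"
  by (rule nth_equalityI) (auto simp: indicator_list_def)

lemma D1_indicator_list_compl:
  assumes "f \<in> D1"
  shows "snd f (indicator_list (fst f) ({..<fst f} - S)) = (\<not> snd f (indicator_list (fst f) S))"
proof -
  have "snd f (map Not (indicator_list (fst f) S)) = (\<not> snd f (indicator_list (fst f) S))"
    using assms by (simp add: D1_def self_dual_def)
  moreover have "map Not (indicator_list (fst f) S) = indicator_list (fst f) ({..<fst f} - S)"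
    by (simp add: indicator_list_def)
  ultimately show ?thesis by simp
qed

lemma D1_indicator_list_empty: "f \<in> D1 \<Longrightarrow> \<not> snd f (indicator_list (fst f) {})"
  by (simp add: D1_def indicator_list_def map_replicate_const)

lemma mono_of_selfdual_intersecting:
  assumes dual: "\<And>S. S \<subseteq> {..<n} \<Longrightarrow> P ({..<n} - S) = (\<not> P S)"
    and intersecting: "\<And>X Y Z. partition3 n X Y Z \<Longrightarrow> \<not> (P X \<and> P Z)"
    and "S \<subseteq> T" "T \<subseteq> {..<n}" "P S"
  shows "P T"
proof -
  have "\<not> (P S \<and> P ({..<n} - T))"
    by (rule intersecting[of S "T - S"]) (use assms(3,4) in \<open>auto simp: partition3_def\<close>)
  with dual[OF assms(4)] assms(5) show ?thesis by simp
qed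

text \<open>The hypotheses say that \<open>P\<close> is an ultrafilter on \<open>{..<n}\<close>; being finite, it is principal.\<close>
lemma principal_of_selfdual_intersecting_covering:
  assumes dual: "\<And>S. S \<subseteq> {..<n} \<Longrightarrow> P ({..<n} - S) = (\<not> P S)"
    and intersecting: "\<And>X Y Z. partition3 n X Y Z \<Longrightarrow> \<not> (P X \<and> P Z)"
    and covering: "\<And>X Y Z. partition3 n X Y Z \<Longrightarrow> P X \<or> P Y \<or> P Z"
    and "\<not> P {}"
  shows "\<exists>i<n. \<forall>T\<subseteq>{..<n}. P T = (i \<in> T)"
proof -
  have mono: "P T" if "S \<subseteq> T" "T \<subseteq> {..<n}" "P S" for S T
    using mono_of_selfdual_intersecting[OF dual intersecting that] .
  have singleton: "\<exists>i\<in>S. P {i}" if "finite S" "S \<subseteq> {..<n}" "P S" for S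
    using that
  proof (induction S rule: finite_psubset_induct)
    case (psubset S)
    obtain i where i: "i \<in> S" using psubset.prems(2) \<open>\<not> P {}\<close> by fastforce
    have "P {i} \<or> P (S - {i}) \<or> P ({..<n} - S)"
      by (rule covering) (use i psubset.prems(1) in \<open>auto simp: partition3_def\<close>)
    moreover have "\<not> P ({..<n} - S)"
      using dual[OF psubset.prems(1)] psubset.prems(2) by blast
    ultimately consider "P {i}" | "P (S - {i})" by blast
    then show ?case
    proof cases
      case 2
      moreover have "S - {i} \<subset> S" "S - {i} \<subseteq> {..<n}" using i psubset.prems(1) by auto
      ultimately show ?thesis using psubset.IH by blast
    qed (use i in blast)
  qed
  have "P {..<n}" using dual[of "{}"] \<open>\<not> P {}\<close> by simp
  then obtain i where i: "i < n" "P {i}" using singleton[of "{..<n}"] by auto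
  have "P T = (i \<in> T)" if T: "T \<subseteq> {..<n}" for T
  proof
    assume "P T"
    show "i \<in> T"
    proof (rule ccontr)
      assume "i \<notin> T"
      then have "P ({..<n} - {i})"
        using mono[of T "{..<n} - {i}"] T \<open>P T\<close> by blast
      with dual[of "{i}"] i show False by simp
    qed
  next
    assume "i \<in> T"
    then show "P T" using mono[of "{i}" T] i T by blast
  qed
  with i show ?thesis by blast
qed

lemma parity_of_selfdual_additive:
  assumes dual: "\<And>S. S \<subseteq> {..<n} \<Longrightarrow> P ({..<n} - S) = (\<not> P S)"
    and additive: "\<And>X Y Z. partition3 n X Y Z \<Longrightarrow> P X \<noteq> (P Y \<noteq> P Z)"
    and "\<not> P {}" "S \<subseteq> {..<n}"
  shows "P S = odd (card {i\<in>S. P {i}})"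
proof -
  have union: "P (X \<union> Y) = (P X \<noteq> P Y)" if "X \<inter> Y = {}" "X \<union> Y \<subseteq> {..<n}" for X Y
    using additive[of X Y "{..<n} - (X \<union> Y)"] dual[OF that(2)] that
    by (auto simp: partition3_def)
  have "finite S" using assms(4) finite_subset by blast
  from this assms(4) show ?thesis
  proof (induction S rule: finite_induct)
    case (insert j S)
    have "P (insert j S) = (P {j} \<noteq> P S)"
      using union[of "{j}" S] insert by auto
    moreover have "{i\<in>insert j S. P {i}} = (if P {j} then insert j {i\<in>S. P {i}} else {i\<in>S. P {i}})"
      by auto
    ultimately show ?case
      using insert by auto
  qed (use \<open>\<not> P {}\<close> in simp)
qed

lemma partition3_minor:
  assumes "clone UNIV C" "f \<in> C" "partition3 (fst f) X Y Z"
  shows "\<exists>g\<in>C. fst g = 3 \<and> snd g [True, False, False] = snd f (indicator_list (fst f) X)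
     \<and> snd g [False, True, False] = snd f (indicator_list (fst f) Y)
     \<and> snd g [False, False, True] = snd f (indicator_list (fst f) Z)"
proof -
  define block where "block i = (if i \<in> X then 0 else if i \<in> Y then 1 else 2 :: nat)" for i
  define g where "g = minor_op UNIV 3 f block"
  have eval: "snd g [x, y, z] = snd f (map (\<lambda>i. [x, y, z] ! block i) [0..<fst f])" for x y z
    by (simp add: g_def snd_minor_op)
  have "map (\<lambda>i. [True, False, False] ! block i) [0..<fst f] = indicator_list (fst f) X"
    and "map (\<lambda>i. [False, True, False] ! block i) [0..<fst f] = indicator_list (fst f) Y"
    and "map (\<lambda>i. [False, False, True] ! block i) [0..<fst f] = indicator_list (fst f) Z"
    unfolding indicator_list_def
    by (rule map_cong; use assms(3) in \<open>auto simp: partition3_def block_def\<close>)+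
  moreover have "g \<in> C"
    unfolding g_def by (rule clone_minor_op[OF assms(1,2)]) (simp add: block_def)
  moreover have "fst g = 3" by (simp add: g_def)
  ultimately show ?thesis
    by (intro bexI[of _ g]) (simp_all add: eval)
qed

lemma D1_partition_values:
  assumes C: "clone UNIV C" "C \<subseteq> D1" and f: "f \<in> C" "partition3 (fst f) X Y Z"
  defines "P \<equiv> \<lambda>S. snd f (indicator_list (fst f) S)"
  shows "(xor3 \<notin> C \<longrightarrow> \<not> (P X \<and> P Z))
     \<and> (maj3 \<notin> C \<longrightarrow> (P X \<or> P Y \<or> P Z) \<and> (P X \<noteq> (P Y \<noteq> P Z)))"
proof -
  obtain g where "g \<in> C" "fst g = 3" "snd g [True, False, False] = P X"
     "snd g [False, True, False] = P Y" "snd g [False, False, True] = P Z"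
    using partition3_minor[OF C(1) f] unfolding P_def by blast
  with D1_ternary_signature[OF C] show ?thesis by metis
qed

lemma subclone_D1_subset_O1:
  assumes C: "clone UNIV C" "C \<subseteq> D1" and "maj3 \<notin> C" "xor3 \<notin> C"
  shows "C \<subseteq> O1"
proof
  fix f assume f: "f \<in> C"
  then have "f \<in> D1" using C by blast
  define P where "P S = snd f (indicator_list (fst f) S)" for S
  have "\<exists>i<fst f. \<forall>T\<subseteq>{..<fst f}. P T = (i \<in> T)"
  proof (rule principal_of_selfdual_intersecting_covering)
    show "P ({..<fst f} - S) = (\<not> P S)" for S
      using D1_indicator_list_compl[OF \<open>f \<in> D1\<close>] by (simp add: P_def)
    show "\<not> (P X \<and> P Z)" "P X \<or> P Y \<or> P Z" if "partition3 (fst f) X Y Z" for X Y Z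
      using D1_partition_values[OF C f that] assms(3,4) unfolding P_def by blast+
    show "\<not> P {}"
      using D1_indicator_list_empty[OF \<open>f \<in> D1\<close>] by (simp add: P_def)
  qed
  then obtain i where i: "i < fst f" "\<forall>T\<subseteq>{..<fst f}. P T = (i \<in> T)" by blast
  have "f = proj UNIV (fst f) i"
  proof (rule is_op_UNIV_eqI)
    fix xs :: "bool list" assume xs: "length xs = fst f"
    then have "snd f xs = P {j. j < fst f \<and> xs ! j}"
      by (simp add: P_def indicator_list_of_list)
    also have "\<dots> = xs ! i" using i(1) i(2)[rule_format, of "{j. j < fst f \<and> xs ! j}"] by auto
    finally show "snd f xs = snd (proj UNIV (fst f) i) xs"
      using xs by (simp add: snd_proj)
  qed (use \<open>f \<in> D1\<close> in \<open>auto simp: D1_def is_op_proj_UNIV\<close>)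
  with i show "f \<in> O1" by (auto simp: O1_def)
qed

lemma subclone_D1_subset_D2:
  assumes C: "clone UNIV C" "C \<subseteq> D1" and "xor3 \<notin> C"
  shows "C \<subseteq> D2"
proof
  fix f assume f: "f \<in> C"
  then have "f \<in> D1" using C by blast
  define P where "P S = snd f (indicator_list (fst f) S)" for S
  have mono: "P S \<Longrightarrow> P T" if "S \<subseteq> T" "T \<subseteq> {..<fst f}" for S T
  proof (rule mono_of_selfdual_intersecting[OF _ _ that])
    show "P ({..<fst f} - S) = (\<not> P S)" for S
      using D1_indicator_list_compl[OF \<open>f \<in> D1\<close>] by (simp add: P_def)
    show "\<not> (P X \<and> P Z)" if "partition3 (fst f) X Y Z" for X Y Z
      using D1_partition_values[OF C f that] assms(3) by (simp add: P_def)
  qed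
  have "monotone_bool f"
    unfolding monotone_bool_def
  proof (intro ballI impI)
    fix xs ys :: "bool list"
    assume "xs \<in> tuples UNIV (fst f)" "ys \<in> tuples UNIV (fst f)" and le: "\<forall>i<fst f. xs ! i \<le> ys ! i"
    then have "snd f xs = P {j. j < fst f \<and> xs ! j}" "snd f ys = P {j. j < fst f \<and> ys ! j}"
      by (simp_all add: P_def indicator_list_of_list)
    moreover have "{j. j < fst f \<and> xs ! j} \<subseteq> {j. j < fst f \<and> ys ! j}"
      using le by (auto simp: le_bool_def)
    ultimately show "snd f xs \<le> snd f ys"
      using mono[of "{j. j < fst f \<and> xs ! j}" "{j. j < fst f \<and> ys ! j}"]
      by (auto simp: le_bool_def)
  qed
  with \<open>f \<in> D1\<close> show "f \<in> D2" by (simp add: D1_def D2_def)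
qed

definition parity_op :: "nat \<Rightarrow> nat list \<Rightarrow> bool oper" where
  "parity_op n is =
     (n, \<lambda>xs. if length xs = n then foldr (\<noteq>) (map (\<lambda>i. xs ! i) is) False else undefined)"

lemma L4_eq: "L4 = {parity_op n is | n is. odd (length is) \<and> set is \<subseteq> {..<n}}"
  by (simp add: L4_def parity_op_def)

lemma is_op_parity_op: "is_op UNIV (parity_op n is)"
  by (auto simp: is_op_def parity_op_def)

lemma fst_parity_op [simp]: "fst (parity_op n is) = n"
  by (simp add: parity_op_def)

lemma snd_parity_op:
  "length xs = n \<Longrightarrow> snd (parity_op n is) xs = odd (length (filter (\<lambda>i. xs ! i) is))"
  by (induction "is") (auto simp: parity_op_def)

lemma subclone_D1_subset_L4:
  assumes C: "clone UNIV C" "C \<subseteq> D1" and "maj3 \<notin> C"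
  shows "C \<subseteq> L4"
proof
  fix f assume f: "f \<in> C"
  then have "f \<in> D1" using C by blast
  define n where "n = fst f"
  define P where "P S = snd f (indicator_list n S)" for S
  have parity: "P S = odd (card {i\<in>S. P {i}})" if "S \<subseteq> {..<n}" for S
  proof (rule parity_of_selfdual_additive[OF _ _ _ that])
    show "P ({..<n} - S) = (\<not> P S)" for S
      using D1_indicator_list_compl[OF \<open>f \<in> D1\<close>] by (simp add: P_def n_def)
    show "P X \<noteq> (P Y \<noteq> P Z)" if "partition3 n X Y Z" for X Y Z
      using D1_partition_values[OF C f] that assms(3) by (simp add: P_def n_def)
    show "\<not> P {}"
      using D1_indicator_list_empty[OF \<open>f \<in> D1\<close>] by (simp add: P_def n_def)
  qed
  define "is" where "is = filter (\<lambda>i. P {i}) [0..<n]"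
  have card_eq: "card {i\<in>S. P {i}} = length (filter (\<lambda>i. i \<in> S) is)" if "S \<subseteq> {..<n}" for S
  proof -
    have "{i\<in>S. P {i}} = set (filter (\<lambda>i. i \<in> S) is)" using that by (auto simp: is_def)
    moreover have "distinct (filter (\<lambda>i. i \<in> S) is)" by (simp add: is_def)
    ultimately show ?thesis by (metis distinct_card)
  qed
  have "P {..<n}"
    using D1_indicator_list_compl[OF \<open>f \<in> D1\<close>, of "{}"] D1_indicator_list_empty[OF \<open>f \<in> D1\<close>]
    by (simp add: P_def n_def)
  moreover have "filter (\<lambda>i. i \<in> {..<n}) is = is" by (rule filter_True) (auto simp: is_def)
  ultimately have "odd (length is)"
    using parity[of "{..<n}"] card_eq[of "{..<n}"] by simp
  moreover have "f = parity_op n is"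
  proof (rule is_op_UNIV_eqI)
    fix xs :: "bool list" assume "length xs = fst f"
    then have xs: "length xs = n" by (simp add: n_def)
    define S where "S = {j. j < n \<and> xs ! j}"
    have S: "S \<subseteq> {..<n}" by (auto simp: S_def)
    have "snd f xs = P S" using xs by (simp add: P_def S_def indicator_list_of_list)
    also have "\<dots> = odd (length (filter (\<lambda>i. i \<in> S) is))"
      using parity[OF S] card_eq[OF S] by simp
    also have "filter (\<lambda>i. i \<in> S) is = filter (\<lambda>i. xs ! i) is"
      by (rule filter_cong) (auto simp: S_def is_def)
    finally show "snd f xs = snd (parity_op n is) xs"
      using xs by (simp add: snd_parity_op)
  qed (use \<open>f \<in> D1\<close> in \<open>auto simp: D1_def is_op_parity_op n_def\<close>)
  moreover have "set is \<subseteq> {..<n}" by (auto simp: is_def)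
  ultimately show "f \<in> L4" by (auto simp: L4_eq)
qed

lemma finite_bool_lists: "finite {xs :: bool list. length xs = n}"
  using finite_lists_length_eq[OF finite_UNIV, of n] by simp

definition interpolates :: "bool oper set \<Rightarrow> bool oper \<Rightarrow> bool list set \<Rightarrow> bool" where
  "interpolates C f S \<longleftrightarrow> (\<exists>g\<in>C. fst g = fst f \<and> (\<forall>s\<in>S. snd g s = snd f s))"

lemma interpolates_by_majority:
  assumes C: "clone UNIV C" "maj3 \<in> C" and S: "S \<subseteq> {xs. length xs = fst f}"
    and distinct: "s\<^sub>1 \<noteq> s\<^sub>2" "s\<^sub>1 \<noteq> s\<^sub>3" "s\<^sub>2 \<noteq> s\<^sub>3"
    and interpolating: "interpolates C f (S - {s\<^sub>1})" "interpolates C f (S - {s\<^sub>2})"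
      "interpolates C f (S - {s\<^sub>3})"
  shows "interpolates C f S"
proof -
  obtain g\<^sub>1 g\<^sub>2 g\<^sub>3 where g: "g\<^sub>1 \<in> C" "g\<^sub>2 \<in> C" "g\<^sub>3 \<in> C" "fst g\<^sub>1 = fst f" "fst g\<^sub>2 = fst f" "fst g\<^sub>3 = fst f"
    and agree: "\<forall>s\<in>S - {s\<^sub>1}. snd g\<^sub>1 s = snd f s" "\<forall>s\<in>S - {s\<^sub>2}. snd g\<^sub>2 s = snd f s"
      "\<forall>s\<in>S - {s\<^sub>3}. snd g\<^sub>3 s = snd f s"
    using interpolating unfolding interpolates_def by metis
  define h where "h = compose UNIV (fst f) maj3 [g\<^sub>1, g\<^sub>2, g\<^sub>3]"
  have "h \<in> C"
    unfolding h_def by (rule clone_compose[OF C]) (use g in auto)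
  moreover have "snd h s = snd f s" if "s \<in> S" for s
  proof -
    have "snd h s = snd maj3 [snd g\<^sub>1 s, snd g\<^sub>2 s, snd g\<^sub>3 s]"
      using that S by (auto simp: h_def snd_compose)
    txt \<open>\<open>s\<close> is at most one of the exceptional points, so two of the \<open>g\<^sub>i\<close> are right at \<open>s\<close>.\<close>
    then show ?thesis
      using that agree distinct by (cases "s = s\<^sub>1"; cases "s = s\<^sub>2") (auto simp: snd_maj3)
  qed
  moreover have "fst h = fst f" by (simp add: h_def)
  ultimately show ?thesis unfolding interpolates_def by blast
qed

lemma majority_interpolation:
  assumes C: "clone UNIV C" "maj3 \<in> C" and f: "is_op UNIV f"
    and pairs: "\<And>u v. length u = fst f \<Longrightarrow> length v = fst f \<Longrightarrow> interpolates C f {u, v}"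
  shows "f \<in> C"
proof -
  have "interpolates C f S" if "finite S" "S \<subseteq> {xs. length xs = fst f}" for S
    using that
  proof (induction S rule: finite_psubset_induct)
    case (psubset S)
    show ?case
    proof (cases "\<exists>s\<^sub>1\<in>S. \<exists>s\<^sub>2\<in>S. \<exists>s\<^sub>3\<in>S. s\<^sub>1 \<noteq> s\<^sub>2 \<and> s\<^sub>1 \<noteq> s\<^sub>3 \<and> s\<^sub>2 \<noteq> s\<^sub>3")
      case True
      then obtain s\<^sub>1 s\<^sub>2 s\<^sub>3 where s: "s\<^sub>1 \<in> S" "s\<^sub>2 \<in> S" "s\<^sub>3 \<in> S"
        and distinct: "s\<^sub>1 \<noteq> s\<^sub>2" "s\<^sub>1 \<noteq> s\<^sub>3" "s\<^sub>2 \<noteq> s\<^sub>3" by blast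
      have "interpolates C f (S - {t})" if "t \<in> S" for t
        by (rule psubset.IH) (use that psubset.prems in auto)
      with s show ?thesis
        using interpolates_by_majority[OF C psubset.prems distinct] by blast
    next
      case False
      obtain u v where "length u = fst f" "length v = fst f" "S \<subseteq> {u, v}"
      proof (cases "S = {}")
        case True
        then show ?thesis using that[of "replicate (fst f) False" "replicate (fst f) False"] by simp
      next
        case nonempty: False
        then obtain u where "u \<in> S" by blast
        with False obtain v where "v \<in> S" "S \<subseteq> {u, v}" by blast
        then show ?thesis using that[of u v] \<open>u \<in> S\<close> psubset.prems by auto
      qed
      then show ?thesis using pairs[of u v] by (auto simp: interpolates_def)
    qed
  qed
  then obtain g where g: "g \<in> C" "fst g = fst f" "\<forall>s\<in>{xs. length xs = fst f}. snd g s = snd f s"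
    using finite_bool_lists unfolding interpolates_def by blast
  have "g = f"
    by (rule is_op_UNIV_eqI) (use g f clone_is_op[OF C(1) g(1)] in auto)
  with g show ?thesis by simp
qed

lemma D2_column:
  assumes f: "f \<in> D2" and u: "length u = fst f" and v: "length v = fst f"
  shows "\<exists>i<fst f. u ! i = snd f u \<and> v ! i = snd f v"
proof (rule ccontr)
  assume none: "\<not> ?thesis"
  have dual: "snd f (map Not x) = (\<not> snd f x)" if "length x = fst f" for x
    using f that by (auto simp: D2_def self_dual_def)
  have mono: "snd f x \<Longrightarrow> snd f y"
    if "length x = fst f" "length y = fst f" "\<forall>i<fst f. x ! i \<longrightarrow> y ! i" for x y
    using f that by (auto simp: D2_def monotone_bool_def le_bool_def)
  txt \<open>Otherwise one of \<open>u\<close>, \<open>\<not>u\<close> lies pointwise below one of \<open>v\<close>, \<open>\<not>v\<close>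
    in the wrong direction.\<close>
  show False
  proof (cases "snd f u"; cases "snd f v")
    assume "snd f u" "snd f v"
    then show False using none mono[of v "map Not u"] dual[OF u] u v by auto
  next
    assume "snd f u" "\<not> snd f v"
    then show False using none mono[OF u v] by auto
  next
    assume "\<not> snd f u" "snd f v"
    then show False using none mono[OF v u] by auto
  next
    assume "\<not> snd f u" "\<not> snd f v"
    then show False using none mono[of "map Not u" v] dual[OF u] u v by auto
  qed
qed

lemma interpolates_D2_pair:
  assumes C: "clone UNIV C" and f: "f \<in> D2"
    and u: "length u = fst f" and v: "length v = fst f"
  shows "interpolates C f {u, v}"
proof -
  obtain i where "i < fst f" "u ! i = snd f u" "v ! i = snd f v"
    using D2_column[OF f u v] by blast
  with u v show ?thesis
    unfolding interpolates_def
    by (intro bexI[of _ "proj UNIV (fst f) i"]) (auto simp: snd_proj clone_proj[OF C])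
qed

lemma D1_columns:
  assumes f: "f \<in> D1" and u: "length u = fst f" and v: "length v = fst f"
    and none: "\<not> (\<exists>i<fst f. u ! i = snd f u \<and> v ! i = snd f v)"
  shows "\<exists>i<fst f. u ! i = (\<not> snd f u) \<and> v ! i = snd f v"
    and "\<exists>i<fst f. u ! i = snd f u \<and> v ! i = (\<not> snd f v)"
    and "\<exists>i<fst f. u ! i = (\<not> snd f u) \<and> v ! i = (\<not> snd f v)"
proof -
  have dual: "snd f (map Not x) = (\<not> snd f x)" if "length x = fst f" for x
    using f that by (auto simp: D1_def self_dual_def)
  have zero: "snd f (replicate (fst f) False) = False" using f by (simp add: D1_def)
  have const: "snd f x = c" if "length x = fst f" "\<forall>i<fst f. x ! i = c" for x c
  proof -
    have "x = replicate (fst f) c" using that by (simp add: list_eq_iff_nth_eq)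
    then show ?thesis
      using zero dual[of "replicate (fst f) False"] by (cases c) (auto simp: map_replicate_const)
  qed
  show "\<exists>i<fst f. u ! i = (\<not> snd f u) \<and> v ! i = snd f v"
  proof (rule ccontr)
    assume other: "\<not> ?thesis"
    have "v ! i = (\<not> snd f v)" if "i < fst f" for i
      using none other that by (cases "u ! i = snd f u") auto
    with const[OF v] show False by auto
  qed
  show "\<exists>i<fst f. u ! i = snd f u \<and> v ! i = (\<not> snd f v)"
  proof (rule ccontr)
    assume other: "\<not> ?thesis"
    have "u ! i = (\<not> snd f u)" if "i < fst f" for i
      using none other that by (cases "v ! i = snd f v") auto
    with const[OF u] show False by auto
  qed
  show "\<exists>i<fst f. u ! i = (\<not> snd f u) \<and> v ! i = (\<not> snd f v)"
  proof (rule ccontr)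
    assume other: "\<not> ?thesis"
    have "v ! i = (u ! i \<noteq> (snd f u = snd f v))" if "i < fst f" for i
      using none other that by (cases "u ! i = snd f u") auto
    then have "v = (if snd f u = snd f v then map Not u else u)"
      using u v by (simp add: list_eq_iff_nth_eq)
    then show False
      using dual[OF u] by (cases "snd f u = snd f v") auto
  qed
qed

lemma interpolates_D1_pair:
  assumes C: "clone UNIV C" "xor3 \<in> C" and f: "f \<in> D1"
    and u: "length u = fst f" and v: "length v = fst f"
  shows "interpolates C f {u, v}"
proof (cases "\<exists>i<fst f. u ! i = snd f u \<and> v ! i = snd f v")
  case True
  then obtain i where "i < fst f" "u ! i = snd f u" "v ! i = snd f v" by blast
  with u v show ?thesis
    unfolding interpolates_def
    by (intro bexI[of _ "proj UNIV (fst f) i"]) (auto simp: snd_proj clone_proj[OF C(1)])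
next
  case False
  from D1_columns[OF f u v False] obtain i j k
    where "i < fst f" "j < fst f" "k < fst f"
      and "u ! i = (\<not> snd f u)" "v ! i = snd f v" "u ! j = snd f u" "v ! j = (\<not> snd f v)"
      "u ! k = (\<not> snd f u)" "v ! k = (\<not> snd f v)"
    by blast
  moreover have "compose UNIV (fst f) xor3 (map (proj UNIV (fst f)) [i, j, k]) \<in> C"
    by (rule clone_compose[OF C]) (use calculation in \<open>auto simp: clone_proj[OF C(1)]\<close>)
  ultimately show ?thesis
    using u v unfolding interpolates_def by (intro bexI) (auto simp: snd_compose snd_proj snd_xor3)
qed

lemma parity_op_in_clone:
  assumes C: "clone UNIV C" "xor3 \<in> C"
  shows "odd (length is) \<Longrightarrow> set is \<subseteq> {..<n} \<Longrightarrow> parity_op n is \<in> C"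
proof (induction "is" rule: induct_list012)
  case (2 i)
  have "parity_op n [i] = proj UNIV n i"
    by (rule is_op_UNIV_eqI[OF is_op_parity_op is_op_proj_UNIV])
      (auto simp: snd_parity_op snd_proj)
  with 2 show ?case by (simp add: clone_proj[OF C(1)])
next
  case (3 i j "is")
  let ?h = "compose UNIV n xor3 [proj UNIV n i, proj UNIV n j, parity_op n is]"
  have "?h \<in> C"
    by (rule clone_compose[OF C]) (use 3 in \<open>auto simp: clone_proj[OF C(1)]\<close>)
  moreover have "?h = parity_op n (i # j # is)"
    by (rule is_op_UNIV_eqI[OF is_op_compose_UNIV is_op_parity_op])
      (auto simp: snd_compose snd_proj snd_parity_op snd_xor3)
  ultimately show ?case by simp
qed simp

lemma O1_subset_clone: "clone UNIV C \<Longrightarrow> O1 \<subseteq> C"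
  by (auto simp: O1_def clone_proj)

lemma subclone_D1_cases:
  assumes C: "clone UNIV C" "C \<subseteq> D1"
  shows "C \<in> {O1, D1, D2, L4}"
proof (cases "maj3 \<in> C"; cases "xor3 \<in> C")
  assume "maj3 \<in> C" "xor3 \<in> C"
  then have "D1 \<subseteq> C"
    by (auto simp: D1_def intro!: majority_interpolation[OF C(1)] interpolates_D1_pair[OF C(1)])
  with C show ?thesis by auto
next
  assume "maj3 \<in> C" "xor3 \<notin> C"
  then have "D2 \<subseteq> C"
    by (auto simp: D2_def intro!: majority_interpolation[OF C(1)] interpolates_D2_pair[OF C(1)])
  with subclone_D1_subset_D2[OF C \<open>xor3 \<notin> C\<close>] show ?thesis by auto
next
  assume "maj3 \<notin> C" "xor3 \<in> C"
  then have "L4 \<subseteq> C"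
    using parity_op_in_clone[OF C(1)] by (auto simp: L4_eq)
  with subclone_D1_subset_L4[OF C \<open>maj3 \<notin> C\<close>] show ?thesis by auto
next
  assume "maj3 \<notin> C" "xor3 \<notin> C"
  with subclone_D1_subset_O1[OF C] O1_subset_clone[OF C(1)] show ?thesis by auto
qed

section \<open>The Boolean trace of a conservative clone\<close>

definition bool_trace :: "'a \<Rightarrow> 'a \<Rightarrow> 'a oper \<Rightarrow> bool oper" where
  "bool_trace b\<^sub>0 b\<^sub>1 f = (fst f, \<lambda>xs. if length xs = fst f
     then snd f (map (\<lambda>b. if b then b\<^sub>1 else b\<^sub>0) xs) = b\<^sub>1 else undefined)"

lemma fst_bool_trace [simp]: "fst (bool_trace b\<^sub>0 b\<^sub>1 f) = fst f"
  by (simp add: bool_trace_def)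

lemma snd_bool_trace:
  "length xs = fst f \<Longrightarrow>
    snd (bool_trace b\<^sub>0 b\<^sub>1 f) xs = (snd f (map (\<lambda>b. if b then b\<^sub>1 else b\<^sub>0) xs) = b\<^sub>1)"
  by (simp add: bool_trace_def)

lemma is_op_bool_trace: "is_op UNIV (bool_trace b\<^sub>0 b\<^sub>1 f)"
  by (auto simp: is_op_def bool_trace_def)

locale conservative_trace =
  fixes A :: "'a set" and F :: "'a oper set" and b\<^sub>0 b\<^sub>1 :: 'a
  assumes clone: "clone A F" and conservative: "conservative A F"
    and binary_projection: "\<And>g. g \<in> F \<Longrightarrow> fst g = 2 \<Longrightarrow> is_projection A g"
    and b\<^sub>0: "b\<^sub>0 \<in> A" and b\<^sub>1: "b\<^sub>1 \<in> A" and b\<^sub>0_neq_b\<^sub>1: "b\<^sub>0 \<noteq> b\<^sub>1"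
begin

abbreviation \<tau> :: "'a oper \<Rightarrow> bool oper" where
  "\<tau> \<equiv> bool_trace b\<^sub>0 b\<^sub>1"

lemma binary_minor_projection:
  assumes f: "f \<in> F" and x: "length x = fst f"
  shows "\<exists>j<2. \<forall>p\<in>A. \<forall>q\<in>A. snd f (map (\<lambda>b. if b then q else p) x) = [p, q] ! j"
proof -
  define g where "g = minor_op A 2 f (\<lambda>i. if x ! i then 1 else 0)"
  have "g \<in> F"
    unfolding g_def by (rule clone_minor_op[OF clone f]) simp
  then obtain j where j: "j < 2" "g = proj A 2 j"
    using binary_projection by (fastforce simp: g_def is_projection_def)
  have "snd f (map (\<lambda>b. if b then q else p) x) = [p, q] ! j" if "p \<in> A" "q \<in> A" for p q
  proof -
    have pq: "[p, q] \<in> tuples A 2" using that by (simp add: tuples_def)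
    have "map (\<lambda>i. [p, q] ! (if x ! i then 1 else 0)) [0..<fst f] = map (\<lambda>b. if b then q else p) x"
      using x by (simp add: list_eq_iff_nth_eq)
    then have "snd f (map (\<lambda>b. if b then q else p) x) = snd g [p, q]"
      by (simp add: g_def snd_minor_op[OF pq])
    also have "\<dots> = [p, q] ! j" by (simp add: j(2) snd_proj[OF pq])
    finally show ?thesis .
  qed
  with j(1) show ?thesis by blast
qed

text \<open>As binary minors are projections, the value on a two-valued tuple does not depend on
  which two values are used.\<close>
lemma eval_two_valued:
  assumes f: "f \<in> F" and x: "length x = fst f"
    and \<rho>: "\<rho> False \<in> A" "\<rho> True \<in> A" "\<rho> False \<noteq> \<rho> True"
  shows "snd f (map \<rho> x) = \<rho> (snd (\<tau> f) x)"
proof -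
  obtain j where j: "j < 2"
    and eval: "\<And>p q. p \<in> A \<Longrightarrow> q \<in> A \<Longrightarrow> snd f (map (\<lambda>b. if b then q else p) x) = [p, q] ! j"
    using binary_minor_projection[OF f x] by blast
  have "(\<lambda>b. if b then \<rho> True else \<rho> False) = \<rho>"
    by (auto simp: fun_eq_iff)
  then have "snd f (map \<rho> x) = [\<rho> False, \<rho> True] ! j"
    using eval[OF \<rho>(1,2)] by simp
  moreover have "snd (\<tau> f) x = ([b\<^sub>0, b\<^sub>1] ! j = b\<^sub>1)"
    using eval[OF b\<^sub>0 b\<^sub>1] x by (simp add: snd_bool_trace)
  ultimately show ?thesis
    using j \<rho>(3) b\<^sub>0_neq_b\<^sub>1 by (auto simp: less_2_cases_iff)
qed

lemma trace_in_D1: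
  assumes f: "f \<in> F"
  shows "\<tau> f \<in> D1"
proof -
  have "self_dual (\<tau> f)"
    unfolding self_dual_def
  proof
    fix xs :: "bool list" assume "xs \<in> tuples UNIV (fst (\<tau> f))"
    then have xs: "length xs = fst f" by simp
    have "snd (\<tau> f) (map Not xs) = (snd f (map (\<lambda>b. if b then b\<^sub>1 else b\<^sub>0) (map Not xs)) = b\<^sub>1)"
      using xs by (simp only: snd_bool_trace length_map)
    also have "map (\<lambda>b. if b then b\<^sub>1 else b\<^sub>0) (map Not xs) = map (\<lambda>b. if b then b\<^sub>0 else b\<^sub>1) xs"
      by (induction xs) auto
    also have "snd f (map (\<lambda>b. if b then b\<^sub>0 else b\<^sub>1) xs) = (if snd (\<tau> f) xs then b\<^sub>0 else b\<^sub>1)"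
      by (rule eval_two_valued[OF f xs]) (use b\<^sub>0 b\<^sub>1 b\<^sub>0_neq_b\<^sub>1 in auto)
    finally show "snd (\<tau> f) (map Not xs) = (\<not> snd (\<tau> f) xs)"
      using b\<^sub>0_neq_b\<^sub>1 by auto
  qed
  moreover have "\<not> snd (\<tau> f) (replicate (fst f) False)"
  proof
    assume "snd (\<tau> f) (replicate (fst f) False)"
    then have "snd f (replicate (fst f) b\<^sub>0) = b\<^sub>1"
      by (simp add: snd_bool_trace map_replicate_const)
    moreover have "replicate (fst f) b\<^sub>0 \<in> tuples A (fst f)"
      using b\<^sub>0 by (auto simp: tuples_def)
    then have "snd f (replicate (fst f) b\<^sub>0) \<in> set (replicate (fst f) b\<^sub>0)"
      using conservative f unfolding conservative_def by blast
    ultimately show False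
      using b\<^sub>0_neq_b\<^sub>1 by (auto dest: in_set_replicate[THEN iffD1])
  qed
  ultimately show ?thesis by (simp add: D1_def is_op_bool_trace)
qed

lemma trace_proj:
  assumes "i < n"
  shows "\<tau> (proj A n i) = proj UNIV n i"
proof (rule is_op_UNIV_eqI[OF is_op_bool_trace is_op_proj_UNIV])
  fix xs :: "bool list" assume "length xs = fst (\<tau> (proj A n i))"
  then have xs: "length xs = n" by simp
  have "map (\<lambda>b. if b then b\<^sub>1 else b\<^sub>0) xs \<in> tuples A n"
    using xs b\<^sub>0 b\<^sub>1 by (auto simp: tuples_def)
  then show "snd (\<tau> (proj A n i)) xs = snd (proj UNIV n i) xs"
    using xs b\<^sub>0_neq_b\<^sub>1 \<open>i < n\<close> by (auto simp: snd_bool_trace snd_proj)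
qed simp

lemma trace_compose:
  assumes f: "f \<in> F" and gs: "set gs \<subseteq> F" "length gs = fst f" "\<forall>g\<in>set gs. fst g = m"
  shows "\<tau> (compose A m f gs) = compose UNIV m (\<tau> f) (map \<tau> gs)"
proof (rule is_op_UNIV_eqI[OF is_op_bool_trace is_op_compose_UNIV])
  fix xs :: "bool list" assume "length xs = fst (\<tau> (compose A m f gs))"
  then have xs: "length xs = m" by simp
  define \<rho> where "\<rho> = (\<lambda>b. if b then b\<^sub>1 else b\<^sub>0)"
  have "map \<rho> xs \<in> tuples A m" using xs b\<^sub>0 b\<^sub>1 by (auto simp: tuples_def \<rho>_def)
  have "snd g (map \<rho> xs) = \<rho> (snd (\<tau> g) xs)" if "g \<in> set gs" for g
    by (rule eval_two_valued) (use that gs xs b\<^sub>0 b\<^sub>1 b\<^sub>0_neq_b\<^sub>1 in \<open>auto simp: \<rho>_def\<close>)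
  then have args: "map (\<lambda>g. snd g (map \<rho> xs)) gs = map \<rho> (map (\<lambda>g. snd (\<tau> g) xs) gs)"
    by simp
  have "snd (\<tau> (compose A m f gs)) xs = (snd (compose A m f gs) (map \<rho> xs) = b\<^sub>1)"
    using xs by (simp add: snd_bool_trace \<rho>_def)
  also have "\<dots> = (snd f (map \<rho> (map (\<lambda>g. snd (\<tau> g) xs) gs)) = b\<^sub>1)"
    by (simp only: snd_compose[OF \<open>map \<rho> xs \<in> tuples A m\<close>] args)
  also have "\<dots> = snd (\<tau> f) (map (\<lambda>g. snd (\<tau> g) xs) gs)"
    using gs(2) by (simp add: snd_bool_trace \<rho>_def)
  also have "\<dots> = snd (compose UNIV m (\<tau> f) (map \<tau> gs)) xs"
    using xs by (simp add: snd_compose comp_def)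
  finally show "snd (\<tau> (compose A m f gs)) xs = snd (compose UNIV m (\<tau> f) (map \<tau> gs)) xs" .
qed simp

lemma trace_image_clone: "clone UNIV (\<tau> ` F)"
  unfolding clone_def
proof (intro conjI allI impI ballI)
  show "is_op UNIV g" if "g \<in> \<tau> ` F" for g
    using that by (auto simp: is_op_bool_trace)
  show "proj UNIV n i \<in> \<tau> ` F" if "i < n" for n i
    using trace_proj[OF that] clone_proj[OF clone that] by (metis image_eqI)
next
  fix f' m gs'
  assume "f' \<in> \<tau> ` F" and gs': "length gs' = fst f' \<and> set gs' \<subseteq> \<tau> ` F \<and> (\<forall>g\<in>set gs'. fst g = m)"
  then obtain f where f: "f \<in> F" "f' = \<tau> f" by blast
  from gs' have "gs' \<in> lists (\<tau> ` F)" by auto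
  then obtain gs where gs: "gs \<in> lists F" "gs' = map \<tau> gs" by (auto simp: lists_image)
  then have "set gs \<subseteq> F" "length gs = fst f" "\<forall>g\<in>set gs. fst g = m"
    using gs' f(2) by auto
  then have "compose UNIV m f' gs' = \<tau> (compose A m f gs)"
    and "compose A m f gs \<in> F"
    using trace_compose[OF f(1)] clone_compose[OF clone f(1)] f(2) gs(2) by auto
  then show "compose UNIV m f' gs' \<in> \<tau> ` F" by blast
qed

lemma eval_on_pair:
  assumes B: "B \<subseteq> A" "bij_betw \<sigma> B (UNIV :: bool set)" and f: "f \<in> F"
    and a: "a \<in> tuples B (fst f)"
  shows "snd f a = the_inv_into B \<sigma> (snd (\<tau> f) (map \<sigma> a))"
proof -
  define \<rho> where "\<rho> = the_inv_into B \<sigma>"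
  have inj: "inj_on \<sigma> B" and onto: "\<sigma> ` B = UNIV" using B(2) by (auto simp: bij_betw_def)
  have \<rho>_in: "\<rho> b \<in> B" and \<sigma>_\<rho>: "\<sigma> (\<rho> b) = b" for b
    unfolding \<rho>_def using the_inv_into_into[OF inj] f_the_inv_into_f[OF inj] onto by auto
  have "\<rho> (\<sigma> y) = y" if "y \<in> set a" for y
    using that a inj by (auto simp: \<rho>_def tuples_def the_inv_into_f_f)
  then have "map \<rho> (map \<sigma> a) = a" by (simp add: map_idI)
  moreover have "snd f (map \<rho> (map \<sigma> a)) = \<rho> (snd (\<tau> f) (map \<sigma> a))"
    by (rule eval_two_valued[OF f])
      (use a B(1) \<rho>_in \<sigma>_\<rho>[of False] \<sigma>_\<rho>[of True] in \<open>auto simp: tuples_def\<close>)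
  ultimately show ?thesis by (simp add: \<rho>_def)
qed

text \<open>Identifying the variables of \<open>f\<close> along the distinct entries of \<open>a\<close> gives a minor of arity
  below the rank, hence a projection; testing it on the two-valued tuple that marks the entry
  \<open>a ! i\<close> shows that it selects exactly that entry.\<close>
lemma eval_below_rank:
  assumes f: "f \<in> F" and i: "i < fst f" and trace: "\<tau> f = proj UNIV (fst f) i"
    and a: "a \<in> tuples A (fst f)" and card: "enat (card (set a)) < clone_rank A F"
  shows "snd f a = a ! i"
proof -
  obtain h where "h \<in> F" and h_arity: "fst h = card (set a)"
    and h: "\<And>\<rho>. \<rho> ` set a \<subseteq> A \<Longrightarrow> snd h (map \<rho> (remdups a)) = snd f (map \<rho> a)"
    using remdups_minor[OF clone f a] by blast
  then have "is_projection A h"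
    using card by (intro is_projection_below_clone_rank) simp_all
  then obtain j where j: "j < length (remdups a)" "h = proj A (length (remdups a)) j"
    unfolding is_projection_def by (auto simp: h_arity length_remdups_card_conv)
  have h_eval: "snd h (map \<rho> (remdups a)) = \<rho> (remdups a ! j)" if "\<rho> ` set a \<subseteq> A" for \<rho>
    using that j by (auto simp: snd_proj tuples_def)
  have a_in: "set a \<subseteq> A" and a_len: "length a = fst f" using a by (auto simp: tuples_def)
  have "snd f a = remdups a ! j"
    using h[of "\<lambda>z. z"] h_eval[of "\<lambda>z. z"] a_in by simp
  have "snd (\<tau> f) (map (\<lambda>y. y = a ! i) a)"
    using trace i a_len by (simp add: snd_proj)
  moreover define mark where "mark = (\<lambda>z. if z = a ! i then b\<^sub>1 else b\<^sub>0)"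
  ultimately have "snd f (map mark a) = b\<^sub>1"
    using a_len by (simp add: snd_bool_trace comp_def mark_def)
  moreover have "mark ` set a \<subseteq> A"
    using b\<^sub>0 b\<^sub>1 by (auto simp: mark_def)
  ultimately have "mark (remdups a ! j) = b\<^sub>1"
    using h[of mark] h_eval[of mark] by simp
  then have "remdups a ! j = a ! i"
    using b\<^sub>0_neq_b\<^sub>1 by (auto simp: mark_def split: if_splits)
  with \<open>snd f a = remdups a ! j\<close> show ?thesis by simp
qed

lemma eval_below_rank_of_trace_in_O1:
  assumes f: "f \<in> F" and "\<tau> f \<in> O1"
  shows "\<exists>i<fst f. \<forall>a\<in>tuples A (fst f). enat (card (set a)) < clone_rank A F \<longrightarrow> snd f a = a ! i"
proof -
  obtain n i where "\<tau> f = proj UNIV n i" "i < n" using \<open>\<tau> f \<in> O1\<close> unfolding O1_def by blast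
  moreover from this have "n = fst f" by (metis fst_bool_trace fst_proj)
  ultimately show ?thesis using eval_below_rank[OF f] by blast
qed

lemma trace_image_eq_O1:
  assumes "\<And>g. g \<in> F \<Longrightarrow> fst g = 3 \<Longrightarrow> is_projection A g"
  shows "\<tau> ` F = O1"
proof -
  have "\<tau> ` F \<inter> {maj3, xor3} = {}"
  proof (rule ccontr)
    assume "\<tau> ` F \<inter> {maj3, xor3} \<noteq> {}"
    then obtain g where g: "g \<in> F" "\<tau> g \<in> {maj3, xor3}" by blast
    then have "fst g = 3" by (metis fst_bool_trace fst_maj3 fst_xor3 insertE empty_iff)
    with assms g(1) have "\<exists>i<3. g = proj A 3 i" by (fastforce simp: is_projection_def)
    then obtain i where "g = proj A 3 i" "i < 3" by blast
    then have "\<tau> g \<in> O1" by (auto simp: trace_proj O1_def)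
    with g(2) maj3_notin_O1 xor3_notin_O1 show False by auto
  qed
  then show ?thesis
    using subclone_D1_subset_O1[OF trace_image_clone] O1_subset_clone[OF trace_image_clone]
      trace_in_D1 by blast
qed

end

theorem lemma7:
  fixes A :: "'a set" and F :: "'a oper set" and r :: enat
  assumes "\<exists>a b. a \<in> A \<and> b \<in> A \<and> a \<noteq> b"
    and "clone A F" and "conservative A F"
    and "clone_rank A F = r" and "r \<ge> 3"
  shows "\<exists>P (\<tau> :: 'a oper \<Rightarrow> bool oper). P \<in> {O1, D1, D2, L4} \<and> \<tau> ` F = P
     \<and> (\<forall>f\<in>F. fst (\<tau> f) = fst f)
     \<and> (\<forall>B \<sigma> n f a. B \<subseteq> A \<and> card B = 2 \<and> bij_betw \<sigma> B (UNIV :: bool set)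
            \<and> f \<in> F \<and> fst f = n \<and> a \<in> tuples B n
            \<longrightarrow> snd f a = the_inv_into B \<sigma> (snd (\<tau> f) (map \<sigma> a)))
     \<and> (r \<ge> 4 \<longrightarrow> P = O1 \<and> (\<forall>f\<in>F. \<exists>i<fst f. \<forall>a\<in>tuples A (fst f).
            enat (card (set a)) < r \<longrightarrow> snd f a = a ! i))"
proof -
  obtain b\<^sub>0 b\<^sub>1 where b: "b\<^sub>0 \<in> A" "b\<^sub>1 \<in> A" "b\<^sub>0 \<noteq> b\<^sub>1" using assms(1) by blast
  have small: "is_projection A g" if "g \<in> F" "fst g < k" "enat k \<le> r" for g k
    using is_projection_below_clone_rank[OF that(1)] order_less_le_trans[OF _ that(3)] that(2)
      assms(4) by simp
  have "enat 3 \<le> r" using assms(5) by (simp add: numeral_eq_enat)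
  then have "is_projection A g" if "g \<in> F" "fst g = 2" for g
    using small[OF that(1), of 3] that(2) by simp
  with assms(2,3) b interpret conservative_trace A F b\<^sub>0 b\<^sub>1
    by unfold_locales
  have O1: "\<tau> ` F = O1" if "r \<ge> 4"
  proof (rule trace_image_eq_O1)
    show "is_projection A g" if "g \<in> F" "fst g = 3" for g
      using small[OF that(1), of 4] that(2) \<open>r \<ge> 4\<close> by (simp add: numeral_eq_enat)
  qed
  show ?thesis
  proof (intro exI[of _ "\<tau> ` F"] exI[of _ \<tau>] conjI allI impI ballI)
    show "\<tau> ` F \<in> {O1, D1, D2, L4}"
      using subclone_D1_cases[OF trace_image_clone] trace_in_D1 by blast
    show "snd f a = the_inv_into B \<sigma> (snd (\<tau> f) (map \<sigma> a))"
      if "B \<subseteq> A \<and> card B = 2 \<and> bij_betw \<sigma> B UNIV \<and> f \<in> F \<and> fst f = n \<and> a \<in> tuples B n"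
      for B \<sigma> n f a
      using that eval_on_pair by blast
    show "\<exists>i<fst f. \<forall>a\<in>tuples A (fst f). enat (card (set a)) < r \<longrightarrow> snd f a = a ! i"
      if "r \<ge> 4" "f \<in> F" for f
      using eval_below_rank_of_trace_in_O1[OF \<open>f \<in> F\<close>] O1[OF that(1)] that(2) assms(4) by blast
  qed (use O1 in auto)
qed

end
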